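(* Let $\alpha > -1$ and $k \geq 1$, and let $M_k^{\alpha} \in \mathbb{R}^{k\times k}$ be the Hankel matrix with entries $(M_k^{\alpha})_{ij} = \Gamma(i+j+\alpha-1)$, $1 \leq i,j \leq k$ (i.e. the moment matrix of $\gamma_m = \int_0^\infty x^{m+\alpha}e^{-x}dx = \Gamma(m+\alpha+1)$). Then its Cholesky decomposition is $M_k^{\alpha} = (R_k^{\alpha})^T R_k^{\alpha}$, where $R_k^{\alpha}$ is the upper triangular matrix with entries $$R^{\alpha}_{ij} = \frac{(j-1)!}{(j-i)!}\,\frac{\Gamma(\alpha+j)}{\sqrt{\Gamma(i)\,\Gamma(\alpha+i)}}, \qquad 1 \leq i \leq j \leq k,$$ and $R^{\alpha}_{ij}=0$ for $i>j$.
   Context: $\Gamma$ denotes the Gamma function. *)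

theory Defs
  imports "HOL-Analysis.Analysis"
begin

definition hankel_gamma :: "real \<Rightarrow> nat \<Rightarrow> nat \<Rightarrow> real" where
  "hankel_gamma \<alpha> i j = Gamma (real (i + j) + \<alpha> - 1)"

definition chol_R :: "real \<Rightarrow> nat \<Rightarrow> nat \<Rightarrow> real" where
  "chol_R \<alpha> i j =
     (if i \<le> j
      then fact (j - 1) / fact (j - i) * Gamma (\<alpha> + real j) / sqrt (Gamma (real i) * Gamma (\<alpha> + real i))
      else 0)"

end

theory Submission
  imports Defs
begin

text \<open>
  Write \<open>i = a + 1\<close>, \<open>j = b + 1\<close> and \<open>x = \<alpha> + 1\<close>.  Since
  \<open>\<Gamma>(x + a) = pochhammer (x + m) (a - m) * \<Gamma>(x + m)\<close>, the \<open>(m + 1)\<close>-th term of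
  \<open>(R\<^sup>T R)(i, j)\<close> reduces to \<open>C(a, m) * b!/(b - m)! * pochhammer (x + m) (a - m) * \<Gamma>(x + b)\<close>.
  A Vandermonde convolution of falling and rising factorials sums these terms to
  \<open>pochhammer (x + b) a * \<Gamma>(x + b) = \<Gamma>(x + a + b)\<close>, the \<open>(i, j)\<close> Hankel entry.
\<close>

definition falling_factorial :: "'a::comm_ring_1 \<Rightarrow> nat \<Rightarrow> 'a" where
  "falling_factorial y m = (\<Prod>i<m. y - of_nat i)"

lemma falling_factorial_Suc: "falling_factorial y (Suc m) = falling_factorial y m * (y - of_nat m)"
  by (simp add: falling_factorial_def)

lemma falling_factorial_of_nat:
  "falling_factorial (of_nat b :: 'a::field_char_0) m = (if m \<le> b then fact b / fact (b - m) else 0)"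
proof (induction m)
  case 0
  then show ?case by (simp add: falling_factorial_def)
next
  case (Suc m)
  show ?case
  proof (cases "Suc m \<le> b")
    case True
    have "fact (b - m) = (of_nat (b - m) :: 'a) * fact (b - Suc m)"
      using True by (metis Suc_diff_Suc Suc_le_lessD fact_Suc)
    with True Suc show ?thesis
      by (simp add: falling_factorial_Suc of_nat_diff)
  next
    case False
    then have "b \<in> {..<Suc m}" by simp
    then have "falling_factorial (of_nat b :: 'a) (Suc m) = 0"
      unfolding falling_factorial_def by (intro prod_zero) auto
    with False show ?thesis by simp
  qed
qed

lemma pochhammer_add_Vandermonde:
  fixes x y :: "'a::comm_ring_1"
  shows "pochhammer (x + y) a =
    (\<Sum>m\<le>a. of_nat (a choose m) * falling_factorial y m * pochhammer (x + of_nat m) (a - m))"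
proof (induction a arbitrary: x)
  case 0
  then show ?case by (simp add: falling_factorial_def)
next
  case (Suc a)
  define g where "g m = falling_factorial y m * pochhammer (x + of_nat m) (Suc a - m)" for m
  have split_term: "(x + y) * (of_nat (a choose m) * falling_factorial y m * pochhammer (x + 1 + of_nat m) (a - m))
      = of_nat (a choose m) * g m + of_nat (a choose m) * g (Suc m)" if "m \<le> a" for m
  proof -
    have "pochhammer (x + of_nat m) (Suc a - m) = (x + of_nat m) * pochhammer (x + 1 + of_nat m) (a - m)"
      using that by (simp add: Suc_diff_le pochhammer_rec add_ac)
    moreover have "pochhammer (x + of_nat (Suc m)) (Suc a - Suc m) = pochhammer (x + 1 + of_nat m) (a - m)"
      by (simp add: add_ac)
    ultimately show ?thesis
      unfolding g_def falling_factorial_Suc by (simp add: algebra_simps)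
  qed
  have "pochhammer (x + y) (Suc a) = (x + y) * pochhammer (x + 1 + y) a"
    by (simp add: pochhammer_rec add_ac)
  also have "\<dots> = (\<Sum>m\<le>a. of_nat (a choose m) * g m) + (\<Sum>m\<le>a. of_nat (a choose m) * g (Suc m))"
    using Suc[of "x + 1"] by (simp add: sum_distrib_left split_term sum.distrib)
  also have "(\<Sum>m\<le>a. of_nat (a choose m) * g m) = (\<Sum>m\<le>Suc a. of_nat (a choose m) * g m)"
    by (simp add: binomial_eq_0)
  also have "\<dots> = g 0 + (\<Sum>m\<le>a. of_nat (a choose Suc m) * g (Suc m))"
    by (subst sum.atMost_Suc_shift) simp
  also have "g 0 + (\<Sum>m\<le>a. of_nat (a choose Suc m) * g (Suc m)) + (\<Sum>m\<le>a. of_nat (a choose m) * g (Suc m))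
      = (\<Sum>m\<le>Suc a. of_nat (Suc a choose m) * g m)"
    by (subst sum.atMost_Suc_shift) (simp add: sum.distrib algebra_simps)
  finally show ?case by (simp add: g_def mult.assoc)
qed

lemma Gamma_add_of_nat:
  fixes x :: real
  assumes "x > 0"
  shows "Gamma (x + of_nat n) = pochhammer x n * Gamma x"
proof -
  have "x \<notin> \<int>\<^sub>\<le>\<^sub>0" using assms by (auto elim!: nonpos_Ints_cases)
  then show ?thesis by (simp add: pochhammer_Gamma Gamma_eq_zero_iff)
qed

lemma chol_R_Suc_mult:
  assumes "\<alpha> > -1" "m \<le> a"
  shows "chol_R \<alpha> (Suc m) (Suc a) * chol_R \<alpha> (Suc m) (Suc b)
     = of_nat (a choose m) * falling_factorial (real b) m * pochhammer (\<alpha> + 1 + real m) (a - m)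
       * Gamma (\<alpha> + 1 + real b)"
proof (cases "m \<le> b")
  case False
  then show ?thesis by (simp add: chol_R_def falling_factorial_of_nat)
next
  case True
  define x where "x = \<alpha> + 1"
  have x_pos: "x + real m > 0" using assms x_def by simp
  have Gamma_a: "Gamma (x + real a) = pochhammer (x + real m) (a - m) * Gamma (x + real m)"
    using Gamma_add_of_nat[OF x_pos, of "a - m"] assms(2) by (simp add: of_nat_diff)
  have sqrt_sq: "sqrt (fact m * Gamma (x + real m)) * sqrt (fact m * Gamma (x + real m))
      = fact m * Gamma (x + real m)"
    using x_pos by (simp add: Gamma_real_pos)
  have "chol_R \<alpha> (Suc m) (Suc a) * chol_R \<alpha> (Suc m) (Suc b)
    = fact a / fact (a - m) * Gamma (x + real a) * (fact b / fact (b - m) * Gamma (x + real b))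
       / (sqrt (fact m * Gamma (x + real m)) * sqrt (fact m * Gamma (x + real m)))"
    using assms True Gamma_fact[of m, where 'a = real] unfolding chol_R_def x_def by (simp add: add_ac)
  also have "\<dots> = of_nat (a choose m) * falling_factorial (real b) m * pochhammer (x + real m) (a - m)
      * Gamma (x + real b)"
    unfolding sqrt_sq Gamma_a binomial_fact[OF assms(2)] using True Gamma_real_pos[OF x_pos]
    by (simp add: falling_factorial_of_nat field_simps)
  finally show ?thesis by (simp add: x_def)
qed

lemma chol_R_gram:
  assumes "\<alpha> > -1"
  shows "(\<Sum>m\<le>a. chol_R \<alpha> (Suc m) (Suc a) * chol_R \<alpha> (Suc m) (Suc b)) = hankel_gamma \<alpha> (Suc a) (Suc b)"
proof -
  have "(\<Sum>m\<le>a. chol_R \<alpha> (Suc m) (Suc a) * chol_R \<alpha> (Suc m) (Suc b))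
      = (\<Sum>m\<le>a. of_nat (a choose m) * falling_factorial (real b) m * pochhammer (\<alpha> + 1 + real m) (a - m))
        * Gamma (\<alpha> + 1 + real b)"
    unfolding sum_distrib_right using assms by (intro sum.cong refl chol_R_Suc_mult) auto
  also have "\<dots> = pochhammer (\<alpha> + 1 + real b) a * Gamma (\<alpha> + 1 + real b)"
    using pochhammer_add_Vandermonde[of "\<alpha> + 1" "real b" a] by simp
  also have "\<dots> = Gamma (\<alpha> + 1 + real b + real a)"
    using assms by (simp add: Gamma_add_of_nat)
  also have "\<dots> = hankel_gamma \<alpha> (Suc a) (Suc b)"
    unfolding hankel_gamma_def by (simp add: algebra_simps)
  finally show ?thesis .
qed

lemma chol_R_diag_pos:
  assumes "\<alpha> > -1" "i \<ge> 1"
  shows "chol_R \<alpha> i i > 0"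
  using assms by (simp add: chol_R_def Gamma_real_pos)

theorem proposition5:
  fixes \<alpha> :: real and k :: nat
  assumes "\<alpha> > -1" and "k \<ge> 1"
  shows "(\<forall>i\<in>{1..k}. \<forall>j\<in>{1..k}.
            hankel_gamma \<alpha> i j = (\<Sum>l=1..k. chol_R \<alpha> l i * chol_R \<alpha> l j))
       \<and> (\<forall>i\<in>{1..k}. \<forall>j\<in>{1..k}. j < i \<longrightarrow> chol_R \<alpha> i j = 0)
       \<and> (\<forall>i\<in>{1..k}. chol_R \<alpha> i i > 0)"
proof (intro conjI ballI impI)
  fix i j assume i: "i \<in> {1..k}" and j: "j \<in> {1..k}"
  obtain a b where ab: "i = Suc a" "j = Suc b" using i j by (cases i; cases j) auto
  have "(\<Sum>l=1..k. chol_R \<alpha> l i * chol_R \<alpha> l j) = (\<Sum>l=1..i. chol_R \<alpha> l i * chol_R \<alpha> l j)"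
    using i by (intro sum.mono_neutral_right) (auto simp: chol_R_def)
  also have "\<dots> = (\<Sum>m\<le>a. chol_R \<alpha> (Suc m) i * chol_R \<alpha> (Suc m) j)"
    unfolding ab One_nat_def sum.atLeast_Suc_atMost_Suc_shift atLeast0AtMost by (simp add: comp_def)
  finally show "hankel_gamma \<alpha> i j = (\<Sum>l=1..k. chol_R \<alpha> l i * chol_R \<alpha> l j)"
    using chol_R_gram[OF assms(1)] ab by simp
next
  fix i j :: nat assume "j < i" then show "chol_R \<alpha> i j = 0" by (simp add: chol_R_def)
next
  fix i assume "i \<in> {1..k}" then show "chol_R \<alpha> i i > 0" using assms(1) by (simp add: chol_R_diag_pos)
qed

end
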